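(* Every semi-complete digraph with $n$ vertices that has a feedback arc set of size at most $k$ has at most $A\cdot\exp(C\sqrt{2k})\cdot(n+1)$ $k$-cuts, where $C=\pi\sqrt{2/3}$ and $A$ is a constant such that $p(m)\le\frac{A}{m+1}\exp(C\sqrt{m})$ for all integers $m\ge0$.
   Context: A simple digraph (no loops, no multiple arcs) $T$ is semi-complete if for every pair of distinct vertices $v,w$ at least one of $(v,w),(w,v)$ is an arc. A feedback arc set is a set $F\subseteq E(T)$ with $T\setminus F$ acyclic. A $k$-cut of a digraph $T$ is an ordered partition $(X,Y)$ of $V(T)$ (either part may be empty) such that there are at most $k$ arcs $(u,v)\in E(T)$ with $u\in Y$ and $v\in X$. $p(m)$ denotes the number of partitions of the integer $m$ (multisets of positive integers summing to $m$); such a constant $A$ exists by the Hardy–Ramanujan estimate. *)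

theory Defs
  imports Complex_Main "HOL-Library.Multiset"
begin

definition partition_count :: "nat \<Rightarrow> nat" where
  "partition_count m = card {M :: nat multiset. (\<forall>x\<in>#M. 0 < x) \<and> sum_mset M = m}"

definition simple_digraph :: "'a set \<Rightarrow> ('a \<times> 'a) set \<Rightarrow> bool" where
  "simple_digraph V E \<longleftrightarrow> finite V \<and> E \<subseteq> V \<times> V \<and> (\<forall>v. (v, v) \<notin> E)"

definition semi_complete :: "'a set \<Rightarrow> ('a \<times> 'a) set \<Rightarrow> bool" where
  "semi_complete V E \<longleftrightarrow> simple_digraph V E \<and>
     (\<forall>v\<in>V. \<forall>w\<in>V. v \<noteq> w \<longrightarrow> (v, w) \<in> E \<or> (w, v) \<in> E)"

definition feedback_arc_set :: "('a \<times> 'a) set \<Rightarrow> ('a \<times> 'a) set \<Rightarrow> bool" where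
  "feedback_arc_set E F \<longleftrightarrow> F \<subseteq> E \<and> acyclic (E - F)"

definition is_k_cut :: "'a set \<Rightarrow> ('a \<times> 'a) set \<Rightarrow> nat \<Rightarrow> 'a set \<times> 'a set \<Rightarrow> bool" where
  "is_k_cut V E k XY \<longleftrightarrow> (case XY of (X, Y) \<Rightarrow>
     X \<union> Y = V \<and> X \<inter> Y = {} \<and> card {(u, v) \<in> E. u \<in> Y \<and> v \<in> X} \<le> k)"

definition k_cuts :: "'a set \<Rightarrow> ('a \<times> 'a) set \<Rightarrow> nat \<Rightarrow> ('a set \<times> 'a set) set" where
  "k_cuts V E k = {XY. is_k_cut V E k XY}"

end

theory Submission
  imports Defs
begin

text \<open>Number the vertices along a topological order of the acyclic digraph E - F. A k-cut
  (X, Y) is determined by the set S of numbers of the vertices in X, and every inversion of S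
  (a number in S above a number outside S) comes from an arc between the two vertices: either
  a cut arc from Y to X or a backward arc, which lies in F. Hence S has at most 2k inversions.
  Recording for each element of S how many non-elements lie below it yields a partition of
  the number of inversions, which together with the size of S determines S; so there are at
  most (n + 1)(2k + 1) p(2k) such sets.\<close>

definition gaps_below :: "nat set \<Rightarrow> nat \<Rightarrow> nat" where
  "gaps_below S j = card {i. i < j \<and> i \<notin> S}"

definition gap_profile :: "nat set \<Rightarrow> nat multiset" where
  "gap_profile S = image_mset (gaps_below S) (mset_set S)"

definition inversions :: "nat set \<Rightarrow> (nat \<times> nat) set" where
  "inversions S = Sigma S (\<lambda>j. {i. i < j \<and> i \<notin> S})"

lemma gaps_below_eq: "gaps_below S j = j - card (S \<inter> {..<j})"
proof -
  have "{i. i < j \<and> i \<notin> S} = {..<j} - S" by auto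
  then show ?thesis
    unfolding gaps_below_def by (simp add: card_Diff_subset_Int Int_commute)
qed

lemma gaps_below_mono: "j \<le> j' \<Longrightarrow> gaps_below S j \<le> gaps_below S j'"
  unfolding gaps_below_def by (rule card_mono) auto

lemma gaps_below_Diff_singleton: "j \<le> n \<Longrightarrow> gaps_below (S - {n}) j = gaps_below S j"
  unfolding gaps_below_def by (rule arg_cong[where f=card]) auto

lemma gaps_below_max:
  assumes "S \<subseteq> {..<Suc n}" and "n \<in> S"
  shows "gaps_below S n = Suc n - card S"
proof -
  have fin: "finite S" using assms(1) finite_subset by blast
  have "S \<inter> {..<n} = S - {n}" using assms(1) by auto
  then have "card (S \<inter> {..<n}) = card S - 1" using assms(2) fin by simp
  moreover have "0 < card S" using assms(2) fin card_gt_0_iff by blast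
  ultimately show ?thesis by (simp add: gaps_below_eq)
qed

lemma gaps_below_lt_if_bounded:
  assumes "S \<subseteq> {..<n}" and "j \<in> S"
  shows "gaps_below S j < Suc n - card S"
proof -
  have "card S \<le> n" using card_mono[OF _ assms(1)] by simp
  have "gaps_below S j \<le> gaps_below S n" using assms by (intro gaps_below_mono) auto
  also have "\<dots> = n - card S" using assms(1) by (simp add: gaps_below_eq Int_absorb2)
  finally show ?thesis using \<open>card S \<le> n\<close> by linarith
qed

lemma size_gap_profile: "finite S \<Longrightarrow> size (gap_profile S) = card S"
  unfolding gap_profile_def by simp

lemma sum_gap_profile: "finite S \<Longrightarrow> sum_mset (gap_profile S) = card (inversions S)"
  unfolding gap_profile_def inversions_def
  by (simp add: sum_unfold_sum_mset[symmetric] card_SigmaI gaps_below_def)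

lemma gap_profile_remove_max:
  assumes "S \<subseteq> {..<Suc n}" and "n \<in> S"
  shows "gap_profile S = add_mset (gaps_below S n) (gap_profile (S - {n}))"
proof -
  have fin: "finite S" using assms(1) finite_subset by blast
  have "mset_set S = add_mset n (mset_set (S - {n}))"
    using assms(2) fin by (metis finite_Diff insert_Diff mset_set.insert Diff_iff singletonI)
  moreover have "image_mset (gaps_below S) (mset_set (S - {n})) = gap_profile (S - {n})"
    unfolding gap_profile_def
    by (rule image_mset_cong) (use assms(1) fin in \<open>auto simp: gaps_below_Diff_singleton\<close>)
  ultimately show ?thesis unfolding gap_profile_def by simp
qed

lemma max_in_iff_gap_profile:
  assumes "S \<subseteq> {..<Suc n}"
  shows "n \<in> S \<longleftrightarrow> Suc n - card S \<in># gap_profile S"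
proof
  assume "n \<in> S"
  then show "Suc n - card S \<in># gap_profile S"
    using gap_profile_remove_max[OF assms] gaps_below_max[OF assms] by simp
next
  assume "Suc n - card S \<in># gap_profile S"
  moreover have "finite S" using assms finite_subset by blast
  ultimately obtain j where j: "j \<in> S" "gaps_below S j = Suc n - card S"
    unfolding gap_profile_def by auto
  show "n \<in> S"
  proof (rule ccontr)
    assume "n \<notin> S"
    then have "S \<subseteq> {..<n}" using assms by (auto simp: less_Suc_eq)
    with j show False using gaps_below_lt_if_bounded[of S n j] by simp
  qed
qed

text \<open>The set is recovered from its profile from the top down: the largest candidate
  element n lies in S exactly when the value it would contribute appears in the profile.\<close>
lemma gap_profile_inj:
  "S \<subseteq> {..<n} \<Longrightarrow> T \<subseteq> {..<n} \<Longrightarrow> gap_profile S = gap_profile T \<Longrightarrow> S = T"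
proof (induction n arbitrary: S T)
  case 0
  then show ?case by auto
next
  case (Suc n)
  have "finite S" "finite T" using Suc.prems(1,2) finite_subset by blast+
  then have "card S = card T" using Suc.prems(3) by (metis size_gap_profile)
  then have n_in: "n \<in> S \<longleftrightarrow> n \<in> T"
    using max_in_iff_gap_profile[OF Suc.prems(1)] max_in_iff_gap_profile[OF Suc.prems(2)] Suc.prems(3)
    by simp
  have "S - {n} = T - {n}"
  proof (rule Suc.IH)
    show "gap_profile (S - {n}) = gap_profile (T - {n})"
    proof (cases "n \<in> S")
      case True
      with Suc.prems n_in \<open>card S = card T\<close> show ?thesis
        by (simp add: gap_profile_remove_max gaps_below_max)
    next
      case False
      with Suc.prems n_in show ?thesis by simp
    qed
  qed (use Suc.prems in auto)
  then show ?case using n_in by blast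
qed

definition integer_partitions :: "nat \<Rightarrow> nat multiset set" where
  "integer_partitions m = {M. (\<forall>x\<in>#M. 0 < x) \<and> sum_mset M = m}"

lemma partition_count_eq_card: "partition_count m = card (integer_partitions m)"
  unfolding partition_count_def integer_partitions_def ..

lemma finite_integer_partitions: "finite (integer_partitions m)"
proof (rule finite_subset)
  show "integer_partitions m \<subseteq> (\<Union>s\<le>m. multisets_of_size {..m} s)"
  proof
    fix M assume "M \<in> integer_partitions m"
    then have pos: "\<forall>x\<in>#M. 0 < x" and sum: "sum_mset M = m"
      unfolding integer_partitions_def by auto
    have "x \<le> m" if "x \<in># M" for x
      using sum_mset.remove[OF that] sum by simp
    moreover have "size M \<le> m"
    proof -
      have "size M = (\<Sum>x\<in>#M. 1)" by (rule size_eq_sum_mset)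
      also have "\<dots> \<le> (\<Sum>x\<in>#M. x)" by (rule sum_mset_mono) (use pos in \<open>auto simp: Suc_le_eq\<close>)
      finally show ?thesis using sum by simp
    qed
    ultimately show "M \<in> (\<Union>s\<le>m. multisets_of_size {..m} s)"
      by (auto simp: multisets_of_size_def)
  qed
qed auto

lemma sum_mset_filter_positive: "sum_mset (filter_mset ((<) 0) M) = sum_mset (M :: nat multiset)"
  by (induction M) auto

lemma nat_multiset_eqI_positive_part:
  fixes M N :: "nat multiset"
  assumes "filter_mset ((<) 0) M = filter_mset ((<) 0) N" and "size M = size N"
  shows "M = N"
proof -
  have split: "K = filter_mset ((<) 0) K + replicate_mset (count K 0) 0" for K :: "nat multiset"
  proof -
    have "filter_mset (\<lambda>x. \<not> 0 < x) K = filter_mset (\<lambda>x. x = 0) K" by (rule filter_mset_cong) auto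
    then show ?thesis using multiset_partition[of K "(<) 0"] by (simp add: filter_eq_replicate_mset)
  qed
  have "count M 0 = count N 0"
    using arg_cong[OF split[of M], of size] arg_cong[OF split[of N], of size] assms by simp
  then show ?thesis using split[of M] split[of N] assms(1) by simp
qed

lemma padded_gap_profile_in_partitions:
  assumes "finite S" and "card (inversions S) \<le> K"
  shows "filter_mset ((<) 0) (gap_profile S) + replicate_mset (K - card (inversions S)) 1
           \<in> integer_partitions K"
proof -
  have "sum_mset (filter_mset ((<) 0) (gap_profile S)) = card (inversions S)"
    using sum_gap_profile[OF assms(1)] by (simp add: sum_mset_filter_positive)
  then show ?thesis using assms(2) unfolding integer_partitions_def by auto
qed

text \<open>A set is encoded by its size, its number of inversions and its gap profile with
  the zeros dropped and padded by ones to a partition of K; the zeros are recovered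
  from the size, the padding from the number of inversions.\<close>
lemma card_few_inversions_le:
  "card {S. S \<subseteq> {..<n} \<and> card (inversions S) \<le> K} \<le> (n + 1) * (K + 1) * partition_count K"
proof -
  define Good where "Good = {S. S \<subseteq> {..<n} \<and> card (inversions S) \<le> K}"
  define code where "code S = (card S, card (inversions S),
      filter_mset ((<) 0) (gap_profile S) + replicate_mset (K - card (inversions S)) 1)" for S
  define Codes where "Codes = {..n} \<times> {..K} \<times> integer_partitions K"
  have "code ` Good \<subseteq> Codes"
  proof
    fix c assume "c \<in> code ` Good"
    then obtain S where S: "S \<subseteq> {..<n}" "card (inversions S) \<le> K" and c: "c = code S"
      unfolding Good_def by auto
    have "finite S" using S(1) finite_subset by blast
    have "card S \<le> n" using card_mono[OF _ S(1)] by simp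
    then show "c \<in> Codes"
      using S(2) padded_gap_profile_in_partitions[OF \<open>finite S\<close> S(2)]
      unfolding c code_def Codes_def by auto
  qed
  moreover have "inj_on code Good"
  proof (rule inj_onI)
    fix S T assume "S \<in> Good" "T \<in> Good" and eq: "code S = code T"
    then have bounded: "S \<subseteq> {..<n}" "T \<subseteq> {..<n}" unfolding Good_def by auto
    then have fin: "finite S" "finite T" using finite_subset by blast+
    from eq have card: "card S = card T" and inv: "card (inversions S) = card (inversions T)"
      and padded: "filter_mset ((<) 0) (gap_profile S) + replicate_mset (K - card (inversions S)) 1
         = filter_mset ((<) 0) (gap_profile T) + replicate_mset (K - card (inversions T)) 1"
      unfolding code_def prod.inject by blast+
    have "filter_mset ((<) 0) (gap_profile S) = filter_mset ((<) 0) (gap_profile T)"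
      using padded unfolding inv by (rule add_right_imp_eq)
    moreover have "size (gap_profile S) = size (gap_profile T)"
      using fin card by (simp add: size_gap_profile)
    ultimately have "gap_profile S = gap_profile T" by (rule nat_multiset_eqI_positive_part)
    then show "S = T" using bounded gap_profile_inj by blast
  qed
  moreover have "finite Codes" unfolding Codes_def using finite_integer_partitions by auto
  ultimately have "card Good \<le> card Codes" by (intro card_inj_on_le)
  also have "\<dots> = (n + 1) * (K + 1) * partition_count K"
    unfolding Codes_def partition_count_eq_card by (simp add: card_cartesian_product algebra_simps)
  finally show ?thesis unfolding Good_def .
qed

lemma acyclic_has_sink:
  assumes "finite V" and "V \<noteq> {}" and "acyclic R"
  shows "\<exists>z\<in>V. \<forall>y\<in>V. (z, y) \<notin> R"
proof -
  have "finite (R \<inter> V \<times> V)" using assms(1) by (simp add: finite_Int)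
  moreover have "acyclic (R \<inter> V \<times> V)" using assms(3) by (rule acyclic_subset) blast
  ultimately have "wf ((R \<inter> V \<times> V)\<inverse>)" by (rule finite_acyclic_wf_converse)
  moreover obtain x where "x \<in> V" using assms(2) by blast
  ultimately obtain z where "z \<in> V" and "\<And>y. (y, z) \<in> (R \<inter> V \<times> V)\<inverse> \<Longrightarrow> y \<notin> V"
    using wfE_min by metis
  then show ?thesis by blast
qed

lemma topological_numbering:
  assumes "finite V" and "acyclic R"
  shows "\<exists>f. bij_betw f V {..<card V} \<and> (\<forall>u\<in>V. \<forall>v\<in>V. (u, v) \<in> R \<longrightarrow> f u < f v)"
  using assms(1)
proof (induction V rule: finite_remove_induct)
  case empty
  show ?case by (simp add: bij_betw_def)
next
  case (remove V)
  obtain z where z: "z \<in> V" and sink: "\<forall>y\<in>V. (z, y) \<notin> R"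
    using acyclic_has_sink[OF remove.hyps(1,2) assms(2)] by blast
  define c where "c = card (V - {z})"
  obtain f where f: "bij_betw f (V - {z}) {..<c}"
    and mono: "\<forall>u\<in>V - {z}. \<forall>v\<in>V - {z}. (u, v) \<in> R \<longrightarrow> f u < f v"
    using remove.IH[OF z] unfolding c_def by blast
  have card: "card V = Suc c"
    using card_Suc_Diff1[OF remove.hyps(1) z] unfolding c_def by simp
  define g where "g = f(z := c)"
  have "bij_betw g (V - {z}) {..<c}"
    using f by (rule bij_betw_cong[THEN iffD1, rotated]) (simp add: g_def)
  then have "bij_betw g (V - {z} \<union> {z}) ({..<c} \<union> {g z})"
    by (subst notIn_Un_bij_betw3[symmetric]) (auto simp: g_def)
  moreover have "V - {z} \<union> {z} = V" "{..<c} \<union> {g z} = {..<card V}"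
    using z card by (auto simp: g_def)
  ultimately have "bij_betw g V {..<card V}" by simp
  moreover have "g u < g v" if "u \<in> V" "v \<in> V" "(u, v) \<in> R" for u v
  proof -
    have "u \<noteq> z" using sink that by blast
    show ?thesis
    proof (cases "v = z")
      case True
      have "f u < c" using bij_betw_apply[OF f] \<open>u \<noteq> z\<close> that(1) by simp
      then show ?thesis using True \<open>u \<noteq> z\<close> by (simp add: g_def)
    next
      case False
      have "u \<in> V - {z}" "v \<in> V - {z}" using that False \<open>u \<noteq> z\<close> by auto
      with mono that(3) have "f u < f v" by blast
      then show ?thesis using False \<open>u \<noteq> z\<close> by (simp add: g_def)
    qed
  qed
  ultimately show ?case by (intro exI[of _ g]) blast
qed

lemma inversions_image_subset:
  assumes "bij_betw f V {..<n}" and "X \<union> Y = V" and "X \<inter> Y = {}"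
  shows "inversions (f ` X) \<subseteq> map_prod f f ` {(x, y) \<in> X \<times> Y. f y < f x}"
proof safe
  fix j i assume "(j, i) \<in> inversions (f ` X)"
  then obtain x where x: "x \<in> X" "j = f x" and i: "i < j" "i \<notin> f ` X"
    unfolding inversions_def by auto
  have "j < n" using x assms(1,2) bij_betw_apply by fastforce
  then have "i \<in> f ` V" using i(1) assms(1) by (simp add: bij_betw_def)
  then obtain y where "y \<in> V" "i = f y" by blast
  with x i assms(2) have "(x, y) \<in> {(x, y) \<in> X \<times> Y. f y < f x}" by auto
  then show "(j, i) \<in> map_prod f f ` {(x, y) \<in> X \<times> Y. f y < f x}"
    using x \<open>i = f y\<close> by force
qed

text \<open>A pair across the cut that the numbering puts in the wrong order is joined by an arc:
  pointing from Y to X it crosses the cut, pointing from X to Y it goes backwards.\<close>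
lemma misordered_pairs_subset:
  fixes f :: "'a \<Rightarrow> nat"
  assumes "semi_complete V E" and "X \<union> Y = V" and "\<forall>(u, v)\<in>E - F. f u < f v"
  shows "{(x, y) \<in> X \<times> Y. f y < f x} \<subseteq> {(u, v) \<in> E. u \<in> Y \<and> v \<in> X}\<inverse> \<union> F"
proof safe
  fix x y assume xy: "x \<in> X" "y \<in> Y" "f y < f x" and "(x, y) \<notin> F"
  show "(y, x) \<in> E"
  proof (rule ccontr)
    assume "(y, x) \<notin> E"
    moreover have "x \<noteq> y" using xy(3) by blast
    ultimately have "(x, y) \<in> E"
      using assms(1,2) xy unfolding semi_complete_def by blast
    then have "f x < f y" using assms(3) \<open>(x, y) \<notin> F\<close> by blast
    then show False using xy(3) by simp
  qed
qed

lemma card_inversions_of_cut_le: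
  assumes "semi_complete V E" and "bij_betw f V {..<card V}"
    and "\<forall>(u, v)\<in>E - F. f u < f v" and "finite F"
    and "(X, Y) \<in> k_cuts V E k"
  shows "card (inversions (f ` X)) \<le> k + card F"
proof -
  define C where "C = {(u, v) \<in> E. u \<in> Y \<and> v \<in> X}"
  have cut: "X \<union> Y = V" "X \<inter> Y = {}" "card C \<le> k"
    using assms(5) unfolding k_cuts_def is_k_cut_def C_def by auto
  have "finite V" "E \<subseteq> V \<times> V" using assms(1) unfolding semi_complete_def simple_digraph_def by auto
  then have "finite C" unfolding C_def by (auto intro: finite_subset)
  have "finite X" "finite Y" using \<open>finite V\<close> cut(1) by auto
  then have fin: "finite {(x, y) \<in> X \<times> Y. f y < f x}"
    by (rule finite_subset[rotated, OF finite_cartesian_product]) auto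
  have "card (inversions (f ` X)) \<le> card (map_prod f f ` {(x, y) \<in> X \<times> Y. f y < f x})"
    using inversions_image_subset[OF assms(2) cut(1,2)] fin by (intro card_mono) auto
  also have "\<dots> \<le> card {(x, y) \<in> X \<times> Y. f y < f x}" using fin by (rule card_image_le)
  also have "\<dots> \<le> card (C\<inverse> \<union> F)"
    using misordered_pairs_subset[OF assms(1) cut(1) assms(3)] \<open>finite C\<close> assms(4)
    unfolding C_def by (intro card_mono) auto
  also have "\<dots> \<le> card C + card F" using card_Un_le[of "C\<inverse>" F] by simp
  finally show ?thesis using cut(3) by linarith
qed

lemma card_k_cuts_le:
  assumes "semi_complete V E" and "bij_betw f V {..<card V}"
    and "\<forall>(u, v)\<in>E - F. f u < f v" and "finite F"
  shows "card (k_cuts V E k) \<le> card {S. S \<subseteq> {..<card V} \<and> card (inversions S) \<le> k + card F}"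
proof (rule card_inj_on_le)
  show "inj_on (\<lambda>(X, Y). f ` X) (k_cuts V E k)"
  proof (rule inj_onI, clarify)
    fix X Y X' Y' assume "(X, Y) \<in> k_cuts V E k" "(X', Y') \<in> k_cuts V E k" "f ` X = f ` X'"
    then have "Y = V - X" "Y' = V - X'" "X \<subseteq> V" "X' \<subseteq> V" and eq: "f ` X = f ` X'"
      unfolding k_cuts_def is_k_cut_def by auto
    moreover have "inj_on f V" using assms(2) by (rule bij_betw_imp_inj_on)
    ultimately show "X = X' \<and> Y = Y'" using inj_on_image_eq_iff by metis
  qed
  show "(\<lambda>(X, Y). f ` X) ` k_cuts V E k \<subseteq> {S. S \<subseteq> {..<card V} \<and> card (inversions S) \<le> k + card F}"
    using card_inversions_of_cut_le[OF assms] bij_betw_apply[OF assms(2)]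
    unfolding k_cuts_def is_k_cut_def by fastforce
qed simp

theorem mainTheorem9:
  fixes V :: "'a set" and E :: "('a \<times> 'a) set" and n k :: nat and A :: real
  assumes "semi_complete V E"
    and "card V = n"
    and "\<exists>F. feedback_arc_set E F \<and> card F \<le> k"
    and "\<forall>m::nat. real (partition_count m)
           \<le> A / (real m + 1) * exp (pi * sqrt (2 / 3) * sqrt (real m))"
  shows "real (card (k_cuts V E k))
           \<le> A * exp (pi * sqrt (2 / 3) * sqrt (2 * real k)) * (real n + 1)"
proof -
  have "finite V" and E: "E \<subseteq> V \<times> V"
    using assms(1) unfolding semi_complete_def simple_digraph_def by auto
  obtain F where "F \<subseteq> E" "acyclic (E - F)" "card F \<le> k"
    using assms(3) unfolding feedback_arc_set_def by blast
  have "finite F" using \<open>F \<subseteq> E\<close> E \<open>finite V\<close> by (meson finite_SigmaI finite_subset)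
  obtain f where f: "bij_betw f V {..<n}" and "\<forall>u\<in>V. \<forall>v\<in>V. (u, v) \<in> E - F \<longrightarrow> f u < f v"
    using topological_numbering[OF \<open>finite V\<close> \<open>acyclic (E - F)\<close>] assms(2) by blast
  then have order: "\<forall>(u, v)\<in>E - F. f u < f v" using E by blast
  have "card (k_cuts V E k) \<le> card {S. S \<subseteq> {..<n} \<and> card (inversions S) \<le> k + card F}"
    using card_k_cuts_le[OF assms(1) _ order \<open>finite F\<close>] f assms(2) by simp
  also have "\<dots> \<le> card {S. S \<subseteq> {..<n} \<and> card (inversions S) \<le> 2 * k}"
    using \<open>card F \<le> k\<close> by (intro card_mono) (auto intro: finite_subset[of _ "Pow {..<n}"])
  also have "\<dots> \<le> (n + 1) * (2 * k + 1) * partition_count (2 * k)"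
    by (rule card_few_inversions_le)
  finally have "real (card (k_cuts V E k)) \<le> real ((n + 1) * (2 * k + 1) * partition_count (2 * k))"
    by (rule of_nat_mono)
  also have "\<dots> = (real n + 1) * (2 * real k + 1) * partition_count (2 * k)"
    by (simp add: algebra_simps)
  also have "\<dots> \<le> (real n + 1) * (2 * real k + 1)
                   * (A / (2 * real k + 1) * exp (pi * sqrt (2 / 3) * sqrt (2 * real k)))"
    using assms(4)[rule_format, of "2 * k"] by (intro mult_left_mono) auto
  also have "\<dots> = A * exp (pi * sqrt (2 / 3) * sqrt (2 * real k)) * (real n + 1)"
    by (simp add: field_simps)
  finally show ?thesis .
qed

end
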